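(* Let $R$ be a finite commutative Frobenius ring of characteristic $2$ and let $B$ and $C$ be $n\times n$ matrices over $R$. Let $M$ be the $2n\times 4n$ matrix $$M=\left(\, I_{2n} \;\middle|\; \begin{matrix} B & C\\ C & B\end{matrix}\,\right).$$ Then the code generated by $M$ (the $R$-submodule of $R^{4n}$ spanned by the rows of $M$) is self-dual if and only if $(B+C)(B+C)^T=I_n$ and $BC^T=CB^T$.
   Context: A linear code of length $N$ over $R$ is an $R$-submodule $\mathcal{C}\subseteq R^N$; its dual is $\mathcal{C}^\perp=\{x\in R^N : \langle x,c\rangle=0 \text{ for all } c\in\mathcal{C}\}$ with respect to the Euclidean inner product $\langle x,y\rangle=\sum_i x_iy_i$, and $\mathcal{C}$ is self-dual if $\mathcal{C}=\mathcal{C}^\perp$. *)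

theory Defs
  imports Main "Jordan_Normal_Form.Matrix"
begin

definition is_ideal :: "'a :: comm_ring_1 set \<Rightarrow> bool" where
  "is_ideal I \<longleftrightarrow> 0 \<in> I \<and> (\<forall>x\<in>I. \<forall>y\<in>I. x + y \<in> I) \<and> (\<forall>r. \<forall>x\<in>I. r * x \<in> I)"

definition minimal_ideal :: "'a :: comm_ring_1 set \<Rightarrow> bool" where
  "minimal_ideal I \<longleftrightarrow> is_ideal I \<and> I \<noteq> {0} \<and>
     (\<forall>J. is_ideal J \<and> J \<subseteq> I \<longrightarrow> J = {0} \<or> J = I)"

definition maximal_ideal :: "'a :: comm_ring_1 set \<Rightarrow> bool" where
  "maximal_ideal I \<longleftrightarrow> is_ideal I \<and> I \<noteq> UNIV \<and>
     (\<forall>J. is_ideal J \<and> I \<subseteq> J \<longrightarrow> J = I \<or> J = UNIV)"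

text \<open>Socle: the sum of all minimal ideals (= smallest ideal containing all of them).\<close>
definition socle :: "'a :: comm_ring_1 set" where
  "socle = \<Inter> {I. is_ideal I \<and> \<Union> {J. minimal_ideal J} \<subseteq> I}"

definition jacobson_radical :: "'a :: comm_ring_1 set" where
  "jacobson_radical = \<Inter> {I. maximal_ideal I}"

text \<open>R is Frobenius iff soc(R) is isomorphic to R/rad(R) as R-modules.
  An R-module isomorphism soc(R) -> R/J is given by x \<mapsto> g x + J, where g is
  additive and R-linear modulo J, and the induced map is a bijection onto the cosets.\<close>
definition Frobenius_ring :: "'a :: comm_ring_1 itself \<Rightarrow> bool" where
  "Frobenius_ring _ \<longleftrightarrow>
    (\<exists>g :: 'a \<Rightarrow> 'a.
       (\<forall>x\<in>socle. \<forall>y\<in>socle. g (x + y) - (g x + g y) \<in> jacobson_radical) \<and>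
       (\<forall>r. \<forall>x\<in>socle. g (r * x) - r * g x \<in> jacobson_radical) \<and>
       bij_betw (\<lambda>x. (+) (g x) ` jacobson_radical) socle
                {(+) a ` (jacobson_radical :: 'a set) | a. True})"

definition code_gen :: "'a :: comm_ring_1 mat \<Rightarrow> 'a vec set" where
  "code_gen M = {transpose_mat M *\<^sub>v u | u. u \<in> carrier_vec (dim_row M)}"

definition dual_code :: "nat \<Rightarrow> 'a :: comm_ring_1 vec set \<Rightarrow> 'a vec set" where
  "dual_code N C = {x \<in> carrier_vec N. \<forall>c\<in>C. x \<bullet> c = 0}"

definition self_dual :: "nat \<Rightarrow> 'a :: comm_ring_1 vec set \<Rightarrow> bool" where
  "self_dual N C \<longleftrightarrow> C = dual_code N C"

definition gen_matrix :: "nat \<Rightarrow> 'a :: comm_ring_1 mat \<Rightarrow> 'a mat \<Rightarrow> 'a mat" where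
  "gen_matrix n B C =
     (let A = four_block_mat B C C B
      in mat (2*n) (4*n) (\<lambda>(i,j). if j < 2*n then (1\<^sub>m (2*n)) $$ (i,j) else A $$ (i, j - 2*n)))"

end

theory Submission
  imports Defs "Jordan_Normal_Form.Determinant"
begin

(* The code generated by (I | A) is the graph {(u, A^T u)}, and a vector (x1, x2) is orthogonal
   to (u, A^T u) iff (x1 + A x2) . u = 0, so the dual code is {(-A w, w)}.  The two coincide iff
   A A^T = -I; the inclusion of the dual in the code needs A^T A = -I too, which holds because a
   one-sided inverse of a square matrix over a commutative ring is two-sided (via the adjugate).
   For A = [[B, C], [C, B]] the blocks of A A^T are B B^T + C C^T and B C^T + C B^T, and
   (B + C)(B + C)^T is their sum.  In characteristic 2, -I = I and X + Y = 0 iff X = Y, which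
   turns A A^T = -I into the two stated conditions. *)

lemma mat_mult_left_right_inverse_comm_ring:
  fixes A X :: "'a::comm_ring_1 mat"
  assumes A: "A \<in> carrier_mat n n" and X: "X \<in> carrier_mat n n" and AX: "A * X = 1\<^sub>m n"
  shows "X * A = 1\<^sub>m n"
proof -
  have det_XA: "det X * det A = 1" using det_mult[OF A X] AX by (simp add: mult.commute)
  define L where "L = det X \<cdot>\<^sub>m adj_mat A"
  have L: "L \<in> carrier_mat n n" using adj_mat(1)[OF A] by (simp add: L_def)
  have LA: "L * A = 1\<^sub>m n"
  proof -
    have "L * A = det X \<cdot>\<^sub>m (adj_mat A * A)"
      unfolding L_def using mult_smult_assoc_mat[OF adj_mat(1)[OF A] A] .
    also have "\<dots> = det X \<cdot>\<^sub>m (det A \<cdot>\<^sub>m 1\<^sub>m n)" using adj_mat(3)[OF A] by simp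
    also have "\<dots> = 1\<^sub>m n" using det_XA by (intro eq_matI) auto
    finally show ?thesis .
  qed
  have "X = (L * A) * X" using X by (simp add: LA)
  also have "\<dots> = L * (A * X)" using L A X by (simp add: assoc_mult_mat)
  also have "\<dots> = L" using AX L by simp
  finally show ?thesis using LA by simp
qed

lemma eq_mat_on_vecI:
  fixes A B :: "'a::semiring_1 mat"
  assumes A: "A \<in> carrier_mat nr nc" and B: "B \<in> carrier_mat nr nc"
    and eq: "\<And>v. v \<in> carrier_vec nc \<Longrightarrow> A *\<^sub>v v = B *\<^sub>v v"
  shows "A = B"
proof (rule eq_matI)
  fix i j assume "i < dim_row B" "j < dim_col B"
  then have ij: "i < nr" "j < nc" using B by auto
  have "A $$ (i, j) = (A *\<^sub>v unit_vec nc j) $ i" using A ij by simp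
  also have "\<dots> = (B *\<^sub>v unit_vec nc j) $ i" by (simp add: eq)
  also have "\<dots> = B $$ (i, j)" using B ij by simp
  finally show "A $$ (i, j) = B $$ (i, j)" .
qed (use A B in auto)

lemma scalar_prod_all_zero_imp_zero_vec:
  fixes v :: "'a::semiring_1 vec"
  assumes v: "v \<in> carrier_vec n" and orth: "\<And>u. u \<in> carrier_vec n \<Longrightarrow> v \<bullet> u = 0"
  shows "v = 0\<^sub>v n"
proof (rule eq_vecI)
  fix i assume "i < dim_vec (0\<^sub>v n :: 'a vec)"
  then have i: "i < n" by simp
  have "v $ i = v \<bullet> unit_vec n i" using v i by simp
  then show "v $ i = 0\<^sub>v n $ i" using i orth[of "unit_vec n i"] by simp
qed (use v in simp)

definition standard_form_mat :: "'a::zero_neq_one mat \<Rightarrow> 'a mat" where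
  "standard_form_mat A = mat (dim_row A) (dim_row A + dim_col A)
     (\<lambda>(i, j). if j < dim_row A then 1\<^sub>m (dim_row A) $$ (i, j) else A $$ (i, j - dim_row A))"

definition graph_code :: "'a::comm_ring_1 mat \<Rightarrow> 'a vec set" where
  "graph_code A = {u @\<^sub>v (transpose_mat A *\<^sub>v u) | u. u \<in> carrier_vec (dim_row A)}"

lemma transpose_standard_form_mult_vec:
  fixes A :: "'a::comm_ring_1 mat"
  assumes A: "A \<in> carrier_mat k m" and u: "u \<in> carrier_vec k"
  shows "transpose_mat (standard_form_mat A) *\<^sub>v u = u @\<^sub>v (transpose_mat A *\<^sub>v u)"
proof (rule eq_vecI)
  fix i assume "i < dim_vec (u @\<^sub>v (transpose_mat A *\<^sub>v u))"
  then have i: "i < k + m" using A u by simp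
  show "(transpose_mat (standard_form_mat A) *\<^sub>v u) $ i = (u @\<^sub>v (transpose_mat A *\<^sub>v u)) $ i"
  proof (cases "i < k")
    case True
    have "col (standard_form_mat A) i = unit_vec k i"
      using A True by (intro eq_vecI) (auto simp: standard_form_mat_def unit_vec_def)
    then show ?thesis using A u True i by (simp add: standard_form_mat_def)
  next
    case False
    have "col (standard_form_mat A) i = col A (i - k)"
      using A False i by (intro eq_vecI) (auto simp: standard_form_mat_def)
    then show ?thesis using A u False i by (simp add: standard_form_mat_def)
  qed
qed (use A u in \<open>simp add: standard_form_mat_def\<close>)

lemma code_gen_standard_form: "code_gen (standard_form_mat A) = graph_code A"
proof -
  have A: "A \<in> carrier_mat (dim_row A) (dim_col A)" by (rule carrier_matI) simp_all
  have "dim_row (standard_form_mat A) = dim_row A" by (simp add: standard_form_mat_def)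
  then show ?thesis
    unfolding code_gen_def graph_code_def by (metis (no_types) transpose_standard_form_mult_vec[OF A])
qed

lemma scalar_prod_append_graph_code:
  fixes A :: "'a::comm_ring_1 mat"
  assumes A: "A \<in> carrier_mat k m" and x1: "x1 \<in> carrier_vec k" and x2: "x2 \<in> carrier_vec m"
    and u: "u \<in> carrier_vec k"
  shows "(x1 @\<^sub>v x2) \<bullet> (u @\<^sub>v (transpose_mat A *\<^sub>v u)) = (x1 + A *\<^sub>v x2) \<bullet> u"
proof -
  have "(x1 @\<^sub>v x2) \<bullet> (u @\<^sub>v (transpose_mat A *\<^sub>v u)) = x1 \<bullet> u + x2 \<bullet> (transpose_mat A *\<^sub>v u)"
    using A x1 x2 u by (intro scalar_prod_append) auto
  also have "x2 \<bullet> (transpose_mat A *\<^sub>v u) = (transpose_mat A *\<^sub>v u) \<bullet> x2"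
    using A x2 u by (intro comm_scalar_prod) auto
  also have "\<dots> = (A *\<^sub>v x2) \<bullet> u"
    using A x2 u by (simp add: transpose_vec_mult_scalar comm_scalar_prod[of _ k])
  finally show ?thesis
    using A x1 x2 u by (simp add: add_scalar_prod_distrib)
qed

lemma dual_code_graph_code:
  fixes A :: "'a::comm_ring_1 mat"
  assumes A: "A \<in> carrier_mat k m"
  shows "dual_code (k + m) (graph_code A)
       = {(- (A *\<^sub>v w)) @\<^sub>v w | w. w \<in> carrier_vec m}"
proof (rule Set.set_eqI, rule iffI)
  fix x assume "x \<in> dual_code (k + m) (graph_code A)"
  then have x: "x \<in> carrier_vec (k + m)"
    and orth: "\<And>u. u \<in> carrier_vec k \<Longrightarrow> x \<bullet> (u @\<^sub>v (transpose_mat A *\<^sub>v u)) = 0"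
    using A unfolding dual_code_def graph_code_def by auto
  define x1 x2 where "x1 = vec_first x k" and "x2 = vec_last x m"
  have x12: "x = x1 @\<^sub>v x2" "x1 \<in> carrier_vec k" "x2 \<in> carrier_vec m"
    using x by (auto simp: x1_def x2_def)
  have sum: "x1 + A *\<^sub>v x2 = 0\<^sub>v k"
    using A x12 orth by (intro scalar_prod_all_zero_imp_zero_vec) (auto simp: scalar_prod_append_graph_code)
  have "x1 = - (A *\<^sub>v x2)"
  proof (rule eq_vecI)
    fix i assume "i < dim_vec (- (A *\<^sub>v x2))"
    then have i: "i < k" using A by simp
    have "x1 $ i + (A *\<^sub>v x2) $ i = 0"
      using arg_cong[OF sum, of "\<lambda>v. v $ i"] A x12 i by simp
    then show "x1 $ i = (- (A *\<^sub>v x2)) $ i"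
      using A i by (simp add: eq_neg_iff_add_eq_0)
  qed (use A x12 in simp)
  then show "x \<in> {(- (A *\<^sub>v w)) @\<^sub>v w | w. w \<in> carrier_vec m}" using x12 by blast
next
  fix x assume "x \<in> {(- (A *\<^sub>v w)) @\<^sub>v w | w. w \<in> carrier_vec m}"
  then obtain w where x: "x = (- (A *\<^sub>v w)) @\<^sub>v w" and w: "w \<in> carrier_vec m" by blast
  have "x \<bullet> (u @\<^sub>v (transpose_mat A *\<^sub>v u)) = 0" if "u \<in> carrier_vec k" for u
    using A w that by (simp add: x scalar_prod_append_graph_code uminus_l_inv_vec[of _ k])
  then show "x \<in> dual_code (k + m) (graph_code A)"
    using A w by (auto simp: dual_code_def graph_code_def x)
qed

lemma self_dual_graph_code_iff:
  fixes A :: "'a::comm_ring_1 mat"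
  assumes A: "A \<in> carrier_mat k k"
  shows "self_dual (k + k) (graph_code A)
     \<longleftrightarrow> A * transpose_mat A = - 1\<^sub>m k"
proof -
  let ?S = "{u @\<^sub>v (transpose_mat A *\<^sub>v u) | u. u \<in> carrier_vec k}"
  let ?D = "{(- (A *\<^sub>v w)) @\<^sub>v w | w. w \<in> carrier_vec k}"
  have AT: "transpose_mat A \<in> carrier_mat k k" using A by simp
  have graph: "graph_code A = ?S" using A by (simp add: graph_code_def)
  have "self_dual (k + k) (graph_code A) \<longleftrightarrow> ?S = ?D"
    unfolding self_dual_def dual_code_graph_code[OF A] unfolding graph ..
  also have "\<dots> \<longleftrightarrow> A * transpose_mat A = - 1\<^sub>m k"
  proof
    assume S_eq_D: "?S = ?D"
    have "(A * transpose_mat A) *\<^sub>v u = (- 1\<^sub>m k) *\<^sub>v u" if u: "u \<in> carrier_vec k" for u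
    proof -
      have "u @\<^sub>v (transpose_mat A *\<^sub>v u) \<in> ?D" using S_eq_D u by blast
      then obtain w where w: "w \<in> carrier_vec k"
        and eq: "u @\<^sub>v (transpose_mat A *\<^sub>v u) = (- (A *\<^sub>v w)) @\<^sub>v w" by blast
      have "- (A *\<^sub>v w) \<in> carrier_vec k" using A w by simp
      from append_vec_eq[OF u this, THEN iffD1, OF eq]
      have "u = - (A *\<^sub>v w)" and "transpose_mat A *\<^sub>v u = w" by blast+
      then show ?thesis using A AT u by simp
    qed
    then show "A * transpose_mat A = - 1\<^sub>m k"
      using A AT by (intro eq_mat_on_vecI[of _ k k]) auto
  next
    assume AAT: "A * transpose_mat A = - 1\<^sub>m k"
    have "- transpose_mat A * A = 1\<^sub>m k"
      by (rule mat_mult_left_right_inverse_comm_ring[OF A]) (use AT AAT in simp_all)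
    then have "- (transpose_mat A * A) = - (- 1\<^sub>m k)" by simp
    then have ATA: "transpose_mat A * A = - 1\<^sub>m k" by (simp only: uminus_eq_mat)
    show "?S = ?D"
    proof (rule Set.set_eqI, rule iffI)
      fix x assume "x \<in> ?S"
      then obtain u where x: "x = u @\<^sub>v (transpose_mat A *\<^sub>v u)" and u: "u \<in> carrier_vec k"
        by blast
      have "- (A *\<^sub>v (transpose_mat A *\<^sub>v u)) = u"
        using A AT u by (simp flip: assoc_mult_mat_vec add: AAT)
      then show "x \<in> ?D"
        unfolding x using AT u by (intro CollectI exI[of _ "transpose_mat A *\<^sub>v u"]) simp
    next
      fix x assume "x \<in> ?D"
      then obtain w where x: "x = (- (A *\<^sub>v w)) @\<^sub>v w" and w: "w \<in> carrier_vec k" by blast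
      have "transpose_mat A *\<^sub>v (- (A *\<^sub>v w)) = transpose_mat A *\<^sub>v ((- A) *\<^sub>v w)"
        using A w by simp
      also have "\<dots> = (transpose_mat A * - A) *\<^sub>v w"
        by (rule assoc_mult_mat_vec[symmetric]) (use A AT w in auto)
      also have "\<dots> = w" using w by (simp add: ATA)
      finally have "transpose_mat A *\<^sub>v (- (A *\<^sub>v w)) = w" .
      then show "x \<in> ?S"
        unfolding x using A w by (intro CollectI exI[of _ "- (A *\<^sub>v w)"]) simp
    qed
  qed
  finally show ?thesis .
qed

lemma uminus_mat_CHAR_2:
  assumes "CHAR('a::ring_1) = 2"
  shows "- (M :: 'a mat) = M"
  using uminus_CHAR_2[OF assms] by (intro eq_matI) auto

lemma add_mat_eq_zero_iff_CHAR_2: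
  fixes X Y :: "'a::ring_1 mat"
  assumes "CHAR('a) = 2" and X: "X \<in> carrier_mat nr nc" and Y: "Y \<in> carrier_mat nr nc"
  shows "X + Y = 0\<^sub>m nr nc \<longleftrightarrow> X = Y"
proof -
  have entry: "x + y = 0 \<longleftrightarrow> x = y" for x y :: 'a
    using eq_neg_iff_add_eq_0[of x y] uminus_CHAR_2[OF assms(1), of y] by simp
  show ?thesis using X Y by (auto simp: mat_eq_iff entry)
qed

lemma four_block_mat_eq_iff:
  assumes "A1 \<in> carrier_mat nr1 nc1" "B1 \<in> carrier_mat nr1 nc2"
    "C1 \<in> carrier_mat nr2 nc1" "D1 \<in> carrier_mat nr2 nc2"
    and "A2 \<in> carrier_mat nr1 nc1" "B2 \<in> carrier_mat nr1 nc2"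
    "C2 \<in> carrier_mat nr2 nc1" "D2 \<in> carrier_mat nr2 nc2"
  shows "four_block_mat A1 B1 C1 D1 = four_block_mat A2 B2 C2 D2
     \<longleftrightarrow> A1 = A2 \<and> B1 = B2 \<and> C1 = C2 \<and> D1 = D2"
proof
  assume eq: "four_block_mat A1 B1 C1 D1 = four_block_mat A2 B2 C2 D2"
  have entry: "four_block_mat A1 B1 C1 D1 $$ (i, j) = four_block_mat A2 B2 C2 D2 $$ (i, j)" for i j
    using eq by simp
  have "A1 = A2"
  proof (rule eq_matI)
    fix i j assume "i < dim_row A2" "j < dim_col A2"
    then show "A1 $$ (i, j) = A2 $$ (i, j)" using entry[of i j] assms by simp
  qed (use assms in auto)
  moreover have "B1 = B2"
  proof (rule eq_matI)
    fix i j assume "i < dim_row B2" "j < dim_col B2"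
    then show "B1 $$ (i, j) = B2 $$ (i, j)" using entry[of i "j + nc1"] assms by simp
  qed (use assms in auto)
  moreover have "C1 = C2"
  proof (rule eq_matI)
    fix i j assume "i < dim_row C2" "j < dim_col C2"
    then show "C1 $$ (i, j) = C2 $$ (i, j)" using entry[of "i + nr1" j] assms by simp
  qed (use assms in auto)
  moreover have "D1 = D2"
  proof (rule eq_matI)
    fix i j assume "i < dim_row D2" "j < dim_col D2"
    then show "D1 $$ (i, j) = D2 $$ (i, j)" using entry[of "i + nr1" "j + nc1"] assms by simp
  qed (use assms in auto)
  ultimately show "A1 = A2 \<and> B1 = B2 \<and> C1 = C2 \<and> D1 = D2" by blast
qed simp

lemma four_block_gram_eq_uminus_one_iff_CHAR_2:
  fixes B C :: "'a::comm_ring_1 mat"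
  assumes char: "CHAR('a) = 2" and B: "B \<in> carrier_mat n n" and C: "C \<in> carrier_mat n n"
  shows "four_block_mat B C C B * transpose_mat (four_block_mat B C C B) = - 1\<^sub>m (n + n)
     \<longleftrightarrow> (B + C) * transpose_mat (B + C) = 1\<^sub>m n \<and> B * transpose_mat C = C * transpose_mat B"
proof -
  let ?P = "B * transpose_mat B + C * transpose_mat C"
  let ?Q = "B * transpose_mat C + C * transpose_mat B"
  have carriers: "?P \<in> carrier_mat n n" "?Q \<in> carrier_mat n n"
    "B * transpose_mat C \<in> carrier_mat n n" "C * transpose_mat B \<in> carrier_mat n n"
    using B C by auto
  have gram: "four_block_mat B C C B * transpose_mat (four_block_mat B C C B)
      = four_block_mat ?P ?Q ?Q ?P"
    using B C by (simp add: transpose_four_block_mat mult_four_block_mat comm_add_mat[of _ n n])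
  have "(B + C) * transpose_mat (B + C) = (B + C) * (transpose_mat B + transpose_mat C)"
    using B C by (simp add: transpose_add)
  also have "\<dots> = B * transpose_mat B + C * transpose_mat B + (B * transpose_mat C + C * transpose_mat C)"
    using B C by (simp add: add_mult_distrib_mat mult_add_distrib_mat[of _ n n])
  also have "\<dots> = ?P + ?Q"
    using B C by (intro eq_matI) (simp_all add: ac_simps del: index_mult_mat(1))
  finally have sum: "(B + C) * transpose_mat (B + C) = ?P + ?Q" .
  have "four_block_mat B C C B * transpose_mat (four_block_mat B C C B) = - 1\<^sub>m (n + n)
      \<longleftrightarrow> four_block_mat ?P ?Q ?Q ?P = four_block_mat (1\<^sub>m n) (0\<^sub>m n n) (0\<^sub>m n n) (1\<^sub>m n)"
    unfolding gram uminus_mat_CHAR_2[OF char] four_block_one_mat ..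
  also have "\<dots> \<longleftrightarrow> ?P = 1\<^sub>m n \<and> ?Q = 0\<^sub>m n n"
    using carriers by (subst four_block_mat_eq_iff) auto
  also have "\<dots> \<longleftrightarrow> ?P + ?Q = 1\<^sub>m n \<and> B * transpose_mat C = C * transpose_mat B"
    using carriers add_mat_eq_zero_iff_CHAR_2[OF char carriers(3,4)] by auto
  finally show ?thesis unfolding sum .
qed

lemma gen_matrix_standard_form:
  assumes "B \<in> carrier_mat n n" and "C \<in> carrier_mat n n"
  shows "gen_matrix n B C = standard_form_mat (four_block_mat B C C B)"
proof -
  have four: "4 * n = (n + n) + (n + n)" by simp
  have dim: "dim_row (four_block_mat B C C B) = n + n" "dim_col (four_block_mat B C C B) = n + n"
    using assms by simp_all
  show ?thesis unfolding gen_matrix_def Let_def standard_form_mat_def dim four mult_2 ..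
qed

theorem mainTheorem1:
  fixes B C :: "'a :: {comm_ring_1, finite} mat" and n :: nat
  assumes "Frobenius_ring TYPE('a)"
    and "CHAR('a) = 2"
    and "B \<in> carrier_mat n n" and "C \<in> carrier_mat n n"
  shows "self_dual (4*n) (code_gen (gen_matrix n B C)) \<longleftrightarrow>
           ((B + C) * transpose_mat (B + C) = 1\<^sub>m n \<and> B * transpose_mat C = C * transpose_mat B)"
proof -
  have A: "four_block_mat B C C B \<in> carrier_mat (n + n) (n + n)"
    using assms(3,4) by simp
  have four: "4 * n = (n + n) + (n + n)" by simp
  show ?thesis
    unfolding four gen_matrix_standard_form[OF assms(3,4)] code_gen_standard_form
      self_dual_graph_code_iff[OF A] four_block_gram_eq_uminus_one_iff_CHAR_2[OF assms(2-4)] ..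
qed

end
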